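(* Let $\mathcal{T}_{\mathcal{I}\times\mathcal{J}}$ be a $C_{\mathrm{sp}}$-sparse block tree for the cluster trees $\mathcal{T}_{\mathcal{I}}$ and $\mathcal{T}_{\mathcal{J}}$, and let $\mathcal{T}_x$ be a subtree of $\mathcal{T}_{\mathcal{J}}$. Let $\mathcal{B}\subseteq\mathcal{T}_{\mathcal{I}\times\mathcal{J}}$ be the smallest set of blocks such that $(\mathrm{root}(\mathcal{T}_{\mathcal{I}}),\mathrm{root}(\mathcal{T}_{\mathcal{J}}))\in\mathcal{B}$ and such that whenever $b=(t,s)\in\mathcal{B}$, $b$ is not a leaf of $\mathcal{T}_{\mathcal{I}\times\mathcal{J}}$, and $s$ is not a leaf of $\mathcal{T}_x$, all sons of $b$ in $\mathcal{T}_{\mathcal{I}\times\mathcal{J}}$ belong to $\mathcal{B}$. Let $\mathcal{T}_y := \{t\in\mathcal{T}_{\mathcal{I}} : (t,s)\in\mathcal{B}\text{ for some } s\}$. Then $s\in\mathcal{T}_x$ for every $(t,s)\in\mathcal{B}$, $\mathcal{T}_y$ is a subtree of $\mathcal{T}_{\mathcal{I}}$, and $$\#\mathcal{B}\le C_{\mathrm{sp}}\,\#\mathcal{T}_x,\qquad \#\mathcal{T}_y\le C_{\mathrm{sp}}\,\#\mathcal{T}_x.$$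
   Context: A cluster tree for a finite index set $\mathcal{I}$ is a finite rooted tree $\mathcal{T}_{\mathcal{I}}$ whose nodes $t$ (clusters) carry labels $\hat t\subseteq\mathcal{I}$, such that the root is labeled $\mathcal{I}$ and, for every cluster $t$ with a nonempty set $\mathrm{sons}(t)$ of sons, $\hat t$ is the disjoint union of the labels of its sons. A subtree $\mathcal{T}_x$ of $\mathcal{T}_{\mathcal{J}}$ is a set of clusters of $\mathcal{T}_{\mathcal{J}}$ containing the root, forming a tree with the same labels, such that every cluster of $\mathcal{T}_x$ has in $\mathcal{T}_x$ either no sons or exactly all of its sons in $\mathcal{T}_{\mathcal{J}}$; leaves of $\mathcal{T}_x$ are clusters without sons in $\mathcal{T}_x$. A block tree $\mathcal{T}_{\mathcal{I}\times\mathcal{J}}$ for $\mathcal{T}_{\mathcal{I}}$ and $\mathcal{T}_{\mathcal{J}}$ is a finite rooted tree whose nodes (blocks) are pairs $b=(t,s)$ with $t\in\mathcal{T}_{\mathcal{I}}$, $s\in\mathcal{T}_{\mathcal{J}}$ and label $\hat t\times\hat s$, whose root is $(\mathrm{root}(\mathcal{T}_{\mathcal{I}}),\mathrm{root}(\mathcal{T}_{\mathcal{J}}))$, and such that every non-leaf block $(t,s)$ has sons $\mathrm{sons}(t)\times\mathrm{sons}(s)$ (both nonempty). It is $C_{\mathrm{sp}}$-sparse if $\#\{s:(t,s)\in\mathcal{T}_{\mathcal{I}\times\mathcal{J}}\}\le C_{\mathrm{sp}}$ for all $t\in\mathcal{T}_{\mathcal{I}}$ and $\#\{t:(t,s)\in\mathcal{T}_{\mathcal{I}\times\mathcal{J}}\}\le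 C_{\mathrm{sp}}$ for all $s\in\mathcal{T}_{\mathcal{J}}$. *)

theory Defs
  imports Main "HOL-Library.Disjoint_Sets"
begin

definition is_tree :: "'c set \<Rightarrow> 'c \<Rightarrow> ('c \<Rightarrow> 'c set) \<Rightarrow> bool" where
  "is_tree T r sons \<longleftrightarrow>
     finite T \<and> r \<in> T \<and> (\<forall>t\<in>T. sons t \<subseteq> T) \<and>
     (\<forall>t\<in>T. r \<notin> sons t) \<and>
     (\<forall>t\<in>T. t \<noteq> r \<longrightarrow> (\<exists>!p. p \<in> T \<and> t \<in> sons p)) \<and>
     (\<forall>t\<in>T. (r, t) \<in> {(a, b). a \<in> T \<and> b \<in> sons a}\<^sup>*)"

definition cluster_tree :: "'i set \<Rightarrow> 'c set \<Rightarrow> 'c \<Rightarrow> ('c \<Rightarrow> 'c set) \<Rightarrow> ('c \<Rightarrow> 'i set) \<Rightarrow> bool" where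
  "cluster_tree I T r sons lbl \<longleftrightarrow>
     finite I \<and> is_tree T r sons \<and> lbl r = I \<and>
     (\<forall>t\<in>T. sons t \<noteq> {} \<longrightarrow>
        lbl t = (\<Union>t'\<in>sons t. lbl t') \<and> disjoint_family_on lbl (sons t))"

definition subtree :: "'c set \<Rightarrow> 'c \<Rightarrow> ('c \<Rightarrow> 'c set) \<Rightarrow> 'c set \<Rightarrow> bool" where
  "subtree T r sons S \<longleftrightarrow>
     S \<subseteq> T \<and> is_tree S r (\<lambda>t. sons t \<inter> S) \<and>
     (\<forall>t\<in>S. sons t \<inter> S = {} \<or> sons t \<subseteq> S)"

definition bsons :: "('c \<Rightarrow> 'c set) \<Rightarrow> ('d \<Rightarrow> 'd set) \<Rightarrow> ('c \<times> 'd) set \<Rightarrow> 'c \<times> 'd \<Rightarrow> ('c \<times> 'd) set" where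
  "bsons sonsI sonsJ BT b = (sonsI (fst b) \<times> sonsJ (snd b)) \<inter> BT"

definition block_tree ::
  "'c set \<Rightarrow> 'c \<Rightarrow> ('c \<Rightarrow> 'c set) \<Rightarrow> 'd set \<Rightarrow> 'd \<Rightarrow> ('d \<Rightarrow> 'd set) \<Rightarrow> ('c \<times> 'd) set \<Rightarrow> bool" where
  "block_tree TI rI sonsI TJ rJ sonsJ BT \<longleftrightarrow>
     BT \<subseteq> TI \<times> TJ \<and> is_tree BT (rI, rJ) (bsons sonsI sonsJ BT) \<and>
     (\<forall>b\<in>BT. bsons sonsI sonsJ BT b = {} \<or>
        (sonsI (fst b) \<noteq> {} \<and> sonsJ (snd b) \<noteq> {} \<and>
         bsons sonsI sonsJ BT b = sonsI (fst b) \<times> sonsJ (snd b)))"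

definition sparse :: "nat \<Rightarrow> 'c set \<Rightarrow> 'd set \<Rightarrow> ('c \<times> 'd) set \<Rightarrow> bool" where
  "sparse Csp TI TJ BT \<longleftrightarrow>
     (\<forall>t\<in>TI. card {s. (t, s) \<in> BT} \<le> Csp) \<and> (\<forall>s\<in>TJ. card {t. (t, s) \<in> BT} \<le> Csp)"

inductive_set Bset for rI :: 'c and rJ :: 'd and sonsI sonsJ and BT :: "('c \<times> 'd) set"
  and Tx :: "'d set" where
  root: "(rI, rJ) \<in> Bset rI rJ sonsI sonsJ BT Tx"
| step: "\<lbrakk>(t, s) \<in> Bset rI rJ sonsI sonsJ BT Tx; bsons sonsI sonsJ BT (t, s) \<noteq> {};
          sonsJ s \<inter> Tx \<noteq> {}; b' \<in> bsons sonsI sonsJ BT (t, s)\<rbrakk>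
         \<Longrightarrow> b' \<in> Bset rI rJ sonsI sonsJ BT Tx"

end

theory Submission
  imports Defs
begin

text \<open>The blocks of \<open>B\<close> form a top part of the block tree in which every column cluster
  lies in \<open>T\<^sub>x\<close>; sparsity bounds the blocks in each such column by \<open>C\<^sub>s\<^sub>p\<close>, which gives
  \<open>#B \<le> C\<^sub>s\<^sub>p #T\<^sub>x\<close>, and \<open>T\<^sub>y\<close>, the projection of \<open>B\<close> to row clusters, is no larger
  than \<open>B\<close>. \<open>T\<^sub>y\<close> is a subtree because \<open>B\<close> is closed under taking all sons of a block:
  once one son of a row cluster \<open>t\<close> occurs in \<open>T\<^sub>y\<close>, the father block \<open>(t, s)\<close> was refined,
  and then each son of \<open>t\<close> is paired with the (nonempty) sons of \<open>s\<close>.\<close>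

lemma is_tree_finite: "is_tree T r sons \<Longrightarrow> finite T"
  unfolding is_tree_def by blast

lemma is_tree_root: "is_tree T r sons \<Longrightarrow> r \<in> T"
  unfolding is_tree_def by blast

lemma is_tree_root_not_son: "is_tree T r sons \<Longrightarrow> t \<in> T \<Longrightarrow> r \<notin> sons t"
  unfolding is_tree_def by blast

lemma is_tree_unique_father:
  assumes "is_tree T r sons" "p \<in> T" "p' \<in> T" "t \<in> sons p" "t \<in> sons p'"
  shows "p = p'"
proof -
  have "t \<in> T" "t \<noteq> r"
    using assms unfolding is_tree_def by blast+
  then show ?thesis
    using assms unfolding is_tree_def by blast
qed

lemma block_tree_is_tree:
  "block_tree TI rI sonsI TJ rJ sonsJ BT \<Longrightarrow> is_tree BT (rI, rJ) (bsons sonsI sonsJ BT)"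
  unfolding block_tree_def by blast

lemma block_tree_refined_block:
  assumes "block_tree TI rI sonsI TJ rJ sonsJ BT" "b \<in> BT" "bsons sonsI sonsJ BT b \<noteq> {}"
  shows "sonsJ (snd b) \<noteq> {}" "bsons sonsI sonsJ BT b = sonsI (fst b) \<times> sonsJ (snd b)"
  using assms unfolding block_tree_def by blast+

lemma Bset_subset_block_tree:
  assumes "(rI, rJ) \<in> BT"
  shows "Bset rI rJ sonsI sonsJ BT Tx \<subseteq> BT"
proof
  fix b assume "b \<in> Bset rI rJ sonsI sonsJ BT Tx"
  then show "b \<in> BT"
    by induction (use assms in \<open>auto simp: bsons_def\<close>)
qed

lemma Bset_column_in_subtree:
  assumes "subtree TJ rJ sonsJ Tx" and "(t, s) \<in> Bset rI rJ sonsI sonsJ BT Tx"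
  shows "s \<in> Tx"
  using assms(2)
proof (induction "(t, s)" arbitrary: t s rule: Bset.induct)
  case root
  then show ?case
    using assms(1) unfolding subtree_def by (blast intro: is_tree_root)
next
  case (step t0 s0)
  then have "sonsJ s0 \<subseteq> Tx"
    using assms(1) by (auto simp: subtree_def)
  then show ?case
    using step.hyps by (auto simp: bsons_def)
qed

lemma Bset_father:
  assumes "(t, s) \<in> Bset rI rJ sonsI sonsJ BT Tx" and "t \<noteq> rI"
  obtains t' s' where "(t', s') \<in> Bset rI rJ sonsI sonsJ BT Tx" "t \<in> sonsI t'"
    "sonsJ s' \<inter> Tx \<noteq> {}" "bsons sonsI sonsJ BT (t', s') \<noteq> {}"
  using assms by cases (auto simp: bsons_def)

lemma Bset_all_sons:
  assumes "block_tree TI rI sonsI TJ rJ sonsJ BT"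
    and "(t, s) \<in> Bset rI rJ sonsI sonsJ BT Tx"
    and "sonsJ s \<inter> Tx \<noteq> {}" and "bsons sonsI sonsJ BT (t, s) \<noteq> {}"
    and "t' \<in> sonsI t"
  obtains s' where "(t', s') \<in> Bset rI rJ sonsI sonsJ BT Tx"
proof -
  have "(rI, rJ) \<in> BT"
    using assms(1) by (rule is_tree_root[OF block_tree_is_tree])
  then have "(t, s) \<in> BT"
    using assms(2) by (rule Bset_subset_block_tree[THEN subsetD])
  note refined = block_tree_refined_block[OF assms(1) this assms(4)]
  then obtain s' where "s' \<in> sonsJ s"
    by auto
  then have "(t', s') \<in> bsons sonsI sonsJ BT (t, s)"
    using refined(2) assms(5) by simp
  then show thesis
    by (rule that[OF Bset.step[OF assms(2,4,3)]])
qed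

lemma Bset_rows_reachable:
  assumes "b \<in> Bset rI rJ sonsI sonsJ BT Tx"
  defines "Ty \<equiv> fst ` Bset rI rJ sonsI sonsJ BT Tx"
  shows "(rI, fst b) \<in> {(a, c). a \<in> Ty \<and> c \<in> sonsI a \<inter> Ty}\<^sup>*"
  using assms(1)
proof (induction rule: Bset.induct)
  case root
  then show ?case by simp
next
  case (step t s b')
  have "t \<in> Ty"
    unfolding Ty_def using step.hyps(1) by (rule rev_image_eqI) simp
  moreover have "fst b' \<in> Ty"
    unfolding Ty_def using Bset.step[OF step.hyps] by (rule imageI)
  moreover have "fst b' \<in> sonsI t"
    using step.hyps(4) by (auto simp: bsons_def)
  ultimately have "(t, fst b') \<in> {(a, c). a \<in> Ty \<and> c \<in> sonsI a \<inter> Ty}"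
    by simp
  with step.IH show ?case
    by (simp only: fst_conv rtrancl.rtrancl_into_rtrancl)
qed

lemma subtree_Bset_rows:
  fixes Tx :: "'d set"
  assumes TI: "is_tree TI rI sonsI"
    and BT: "block_tree TI rI sonsI TJ rJ sonsJ BT"
  defines "Ty \<equiv> fst ` Bset rI rJ sonsI sonsJ BT Tx"
  shows "subtree TI rI sonsI Ty"
proof -
  have "Bset rI rJ sonsI sonsJ BT Tx \<subseteq> BT"
    using is_tree_root[OF block_tree_is_tree[OF BT]] by (rule Bset_subset_block_tree)
  moreover have "BT \<subseteq> TI \<times> TJ"
    using BT unfolding block_tree_def by blast
  ultimately have Ty_TI: "Ty \<subseteq> TI"
    unfolding Ty_def by auto
  have in_Ty: "t \<in> Ty" if "(t, s) \<in> Bset rI rJ sonsI sonsJ BT Tx" for t s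
    unfolding Ty_def using that by (rule rev_image_eqI) simp
  have father_in_Ty: "\<exists>p\<in>Ty. t \<in> sonsI p" if "t \<in> Ty" "t \<noteq> rI" for t
  proof -
    from \<open>t \<in> Ty\<close> obtain s where "(t, s) \<in> Bset rI rJ sonsI sonsJ BT Tx"
      unfolding Ty_def by auto
    then obtain p s' where "(p, s') \<in> Bset rI rJ sonsI sonsJ BT Tx" "t \<in> sonsI p"
      using \<open>t \<noteq> rI\<close> by (rule Bset_father)
    then show ?thesis
      using in_Ty by blast
  qed
  have all_sons_in_Ty: "sonsI p \<subseteq> Ty" if "p \<in> Ty" "t \<in> sonsI p" "t \<in> Ty" for p t
  proof
    fix t' assume "t' \<in> sonsI p"
    from \<open>t \<in> Ty\<close> obtain s where "(t, s) \<in> Bset rI rJ sonsI sonsJ BT Tx"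
      unfolding Ty_def by auto
    moreover have "t \<noteq> rI"
      using that Ty_TI is_tree_root_not_son[OF TI] by blast
    ultimately obtain q s' where q: "(q, s') \<in> Bset rI rJ sonsI sonsJ BT Tx" "t \<in> sonsI q"
      "sonsJ s' \<inter> Tx \<noteq> {}" "bsons sonsI sonsJ BT (q, s') \<noteq> {}"
      by (rule Bset_father)
    have "q = p"
      using is_tree_unique_father[OF TI] in_Ty[OF q(1)] q(2) that Ty_TI by blast
    then obtain s'' where "(t', s'') \<in> Bset rI rJ sonsI sonsJ BT Tx"
      using Bset_all_sons[OF BT q(1,3,4)] \<open>t' \<in> sonsI p\<close> by blast
    then show "t' \<in> Ty"
      by (rule in_Ty)
  qed
  show ?thesis
    unfolding subtree_def is_tree_def
  proof (intro conjI ballI impI)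
    show "Ty \<subseteq> TI"
      by (fact Ty_TI)
    show "finite Ty"
      using Ty_TI is_tree_finite[OF TI] by (rule finite_subset)
    show "rI \<in> Ty"
      using Bset.root by (rule in_Ty)
  next
    fix t assume "t \<in> Ty"
    then show "rI \<notin> sonsI t \<inter> Ty"
      using Ty_TI is_tree_root_not_son[OF TI] by blast
  next
    fix t assume "t \<in> Ty" "t \<noteq> rI"
    then show "\<exists>!p. p \<in> Ty \<and> t \<in> sonsI p \<inter> Ty"
      using father_in_Ty is_tree_unique_father[OF TI] Ty_TI by blast
  next
    fix t assume "t \<in> Ty"
    then show "(rI, t) \<in> {(a, b). a \<in> Ty \<and> b \<in> sonsI a \<inter> Ty}\<^sup>*"
      using Bset_rows_reachable unfolding Ty_def by fastforce
  next
    fix t assume "t \<in> Ty"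
    then show "sonsI t \<inter> Ty = {} \<or> sonsI t \<subseteq> Ty"
      using all_sons_in_Ty by blast
  qed blast
qed

lemma card_le_column_bound:
  assumes "finite S" and "finite BT" and "B \<subseteq> BT"
    and "\<And>t s. (t, s) \<in> B \<Longrightarrow> s \<in> S"
    and "\<And>s. s \<in> S \<Longrightarrow> card {t. (t, s) \<in> BT} \<le> C"
  shows "card B \<le> C * card S"
proof -
  have columns: "(\<Union>s\<in>S. {t. (t, s) \<in> BT} \<times> {s}) = BT \<inter> UNIV \<times> S"
    by auto
  have "card B \<le> card (\<Union>s\<in>S. {t. (t, s) \<in> BT} \<times> {s})"
    using assms(2-4) unfolding columns by (intro card_mono) auto
  also have "\<dots> \<le> (\<Sum>s\<in>S. card ({t. (t, s) \<in> BT} \<times> {s}))"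
    using assms(1) by (rule card_UN_le)
  also have "\<dots> \<le> (\<Sum>s\<in>S. C)"
    using assms(5) by (intro sum_mono) (simp add: card_cartesian_product)
  finally show ?thesis
    by (simp add: mult.commute)
qed

theorem mainTheorem6:
  fixes I :: "'i set" and J :: "'j set"
    and TI :: "'c set" and rI :: 'c and sonsI :: "'c \<Rightarrow> 'c set" and lblI :: "'c \<Rightarrow> 'i set"
    and TJ :: "'d set" and rJ :: 'd and sonsJ :: "'d \<Rightarrow> 'd set" and lblJ :: "'d \<Rightarrow> 'j set"
    and BT :: "('c \<times> 'd) set" and Tx :: "'d set" and Csp :: nat
  assumes "cluster_tree I TI rI sonsI lblI"
    and "cluster_tree J TJ rJ sonsJ lblJ"
    and "block_tree TI rI sonsI TJ rJ sonsJ BT"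
    and "sparse Csp TI TJ BT"
    and "subtree TJ rJ sonsJ Tx"
  defines "B \<equiv> Bset rI rJ sonsI sonsJ BT Tx"
    and "Ty \<equiv> {t. \<exists>s. (t, s) \<in> Bset rI rJ sonsI sonsJ BT Tx}"
  shows "(\<forall>(t, s)\<in>B. s \<in> Tx) \<and> subtree TI rI sonsI Ty \<and>
         card B \<le> Csp * card Tx \<and> card Ty \<le> Csp * card Tx"
proof -
  have BT: "finite BT" "(rI, rJ) \<in> BT"
    using block_tree_is_tree[OF assms(3)] by (rule is_tree_finite, rule is_tree_root)
  have B_BT: "B \<subseteq> BT"
    unfolding B_def using Bset_subset_block_tree[OF BT(2)] .
  have columns: "s \<in> Tx" if "(t, s) \<in> B" for t s
    using that unfolding B_def by (rule Bset_column_in_subtree[OF assms(5)])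
  have Ty: "Ty = fst ` B"
    unfolding Ty_def B_def by force
  have "is_tree TI rI sonsI"
    using assms(1) by (simp add: cluster_tree_def)
  then have "subtree TI rI sonsI Ty"
    unfolding Ty B_def using assms(3) by (rule subtree_Bset_rows)
  moreover have card_B: "card B \<le> Csp * card Tx"
  proof (rule card_le_column_bound[OF _ BT(1) B_BT columns])
    show "finite Tx"
      using assms(5) unfolding subtree_def by (blast intro: is_tree_finite)
    show "card {t. (t, s) \<in> BT} \<le> Csp" if "s \<in> Tx" for s
      using assms(4,5) that by (auto simp: sparse_def subtree_def)
  qed
  moreover have "card Ty \<le> card B"
    unfolding Ty using finite_subset[OF B_BT BT(1)] by (rule card_image_le)
  ultimately show ?thesis
    using columns by auto
qed

end
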